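(* Let $\Gamma_1,\Gamma_2$ be finite connected graphs whose normalized Laplacians have a common eigenvalue $\lambda$, with eigenfunctions $f^1$ on $\Gamma_1$ and $f^2$ on $\Gamma_2$. Assume $f^1(p_1)=0$ and $f^2(p_2)=0$ for some vertices $p_1\in\Gamma_1$, $p_2\in\Gamma_2$. Let $\Gamma$ be the graph obtained from the disjoint union of $\Gamma_1$ and $\Gamma_2$ by identifying $p_1$ with $p_2$. Then $\lambda$ is an eigenvalue of the normalized Laplacian of $\Gamma$, with an eigenfunction equal to $f^1$ on $\Gamma_1$ and to $f^2$ on $\Gamma_2$.
   Context: For a finite simple graph without isolated vertices, write $i\sim j$ for adjacency and $n_i$ for the degree of $i$. The normalized Laplacian acts on real functions $v$ on the vertices by $\Delta v(i)=v(i)-\frac{1}{n_i}\sum_{j\sim i}v(j)$; $\lambda$ is an eigenvalue with eigenfunction $u$ if $u\not\equiv 0$ and $\frac{1}{n_i}\sum_{j\sim i}u(j)=(1-\lambda)u(i)$ for all $i$. *)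

theory Defs
  imports Complex_Main
begin

definition simple_graph :: "'a set \<Rightarrow> ('a \<Rightarrow> 'a \<Rightarrow> bool) \<Rightarrow> bool" where
  "simple_graph V E \<longleftrightarrow> finite V
     \<and> (\<forall>x y. E x y \<longrightarrow> x \<in> V \<and> y \<in> V)
     \<and> (\<forall>x y. E x y \<longrightarrow> E y x)
     \<and> (\<forall>x. \<not> E x x)
     \<and> (\<forall>i\<in>V. \<exists>j. E i j)"

definition connected_graph :: "'a set \<Rightarrow> ('a \<Rightarrow> 'a \<Rightarrow> bool) \<Rightarrow> bool" where
  "connected_graph V E \<longleftrightarrow> simple_graph V E \<and> (\<forall>x\<in>V. \<forall>y\<in>V. E\<^sup>*\<^sup>* x y)"

definition nbrs :: "'a set \<Rightarrow> ('a \<Rightarrow> 'a \<Rightarrow> bool) \<Rightarrow> 'a \<Rightarrow> 'a set" where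
  "nbrs V E i = {j \<in> V. E i j}"

definition degree :: "'a set \<Rightarrow> ('a \<Rightarrow> 'a \<Rightarrow> bool) \<Rightarrow> 'a \<Rightarrow> nat" where
  "degree V E i = card (nbrs V E i)"

definition nl_eigen :: "'a set \<Rightarrow> ('a \<Rightarrow> 'a \<Rightarrow> bool) \<Rightarrow> real \<Rightarrow> ('a \<Rightarrow> real) \<Rightarrow> bool" where
  "nl_eigen V E lam u \<longleftrightarrow> (\<exists>i\<in>V. u i \<noteq> 0)
     \<and> (\<forall>i\<in>V. (1 / real (degree V E i)) * (\<Sum>j\<in>nbrs V E i. u j) = (1 - lam) * u i)"

text \<open>Gluing: disjoint union on 'a + 'b, with Inr p2 identified with Inl p1.\<close>
definition glue_map :: "'a \<Rightarrow> 'b \<Rightarrow> 'a + 'b \<Rightarrow> 'a + 'b" where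
  "glue_map p1 p2 v = (if v = Inr p2 then Inl p1 else v)"

definition union_E :: "('a \<Rightarrow> 'a \<Rightarrow> bool) \<Rightarrow> ('b \<Rightarrow> 'b \<Rightarrow> bool) \<Rightarrow> 'a + 'b \<Rightarrow> 'a + 'b \<Rightarrow> bool" where
  "union_E E1 E2 x y = (case (x, y) of
       (Inl a, Inl b) \<Rightarrow> E1 a b
     | (Inr a, Inr b) \<Rightarrow> E2 a b
     | _ \<Rightarrow> False)"

definition glue_V :: "'a set \<Rightarrow> 'b set \<Rightarrow> 'a \<Rightarrow> 'b \<Rightarrow> ('a + 'b) set" where
  "glue_V V1 V2 p1 p2 = glue_map p1 p2 ` (Inl ` V1 \<union> Inr ` V2)"

definition glue_E :: "('a \<Rightarrow> 'a \<Rightarrow> bool) \<Rightarrow> ('b \<Rightarrow> 'b \<Rightarrow> bool) \<Rightarrow> 'a \<Rightarrow> 'b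
                      \<Rightarrow> 'a + 'b \<Rightarrow> 'a + 'b \<Rightarrow> bool" where
  "glue_E E1 E2 p1 p2 x y \<longleftrightarrow>
     (\<exists>a b. union_E E1 E2 a b \<and> glue_map p1 p2 a = x \<and> glue_map p1 p2 b = y)"

end

theory Submission imports Defs begin

text \<open>The eigenfunction on the glued graph is \<open>case_sum f1 f2\<close> (well defined, as both
  functions vanish at the junction). Away from the junction a vertex has the same neighbours,
  degree and neighbour sum as in its own graph. At the junction the neighbours are the disjoint
  union of those of p1 and p2; the eigenvalue equation at a zero of an eigenfunction says that
  its neighbour sum vanishes, so both partial sums vanish and the equation holds there too.\<close>

lemma glue_map_Inl [simp]: "glue_map p1 p2 (Inl a) = Inl a"
  by (simp add: glue_map_def)

lemma glue_map_Inr: "glue_map p1 p2 (Inr b) = (if b = p2 then Inl p1 else Inr b)"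
  by (simp add: glue_map_def)

lemma inj_on_glue_map_Inr: "inj_on (\<lambda>b. glue_map p1 p2 (Inr b)) B"
  by (auto simp: inj_on_def glue_map_Inr split: if_splits)

lemma glue_E_iff:
  "glue_E E1 E2 p1 p2 v w \<longleftrightarrow>
     (\<exists>a b. E1 a b \<and> v = Inl a \<and> w = Inl b) \<or>
     (\<exists>a b. E2 a b \<and> v = glue_map p1 p2 (Inr a) \<and> w = glue_map p1 p2 (Inr b))"
proof
  assume "glue_E E1 E2 p1 p2 v w"
  then obtain x y where "union_E E1 E2 x y" "glue_map p1 p2 x = v" "glue_map p1 p2 y = w"
    unfolding glue_E_def by blast
  then show "(\<exists>a b. E1 a b \<and> v = Inl a \<and> w = Inl b) \<or>
     (\<exists>a b. E2 a b \<and> v = glue_map p1 p2 (Inr a) \<and> w = glue_map p1 p2 (Inr b))"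
    by (cases x; cases y) (auto simp: union_E_def)
next
  assume "(\<exists>a b. E1 a b \<and> v = Inl a \<and> w = Inl b) \<or>
     (\<exists>a b. E2 a b \<and> v = glue_map p1 p2 (Inr a) \<and> w = glue_map p1 p2 (Inr b))"
  then show "glue_E E1 E2 p1 p2 v w"
    unfolding glue_E_def
  proof (elim disjE exE conjE)
    fix a b assume "E1 a b" "v = Inl a" "w = Inl b"
    then show "\<exists>x y. union_E E1 E2 x y \<and> glue_map p1 p2 x = v \<and> glue_map p1 p2 y = w"
      by (intro exI[of _ "Inl a"] exI[of _ "Inl b"]) (simp add: union_E_def)
  next
    fix a b assume "E2 a b" "v = glue_map p1 p2 (Inr a)" "w = glue_map p1 p2 (Inr b)"
    then show "\<exists>x y. union_E E1 E2 x y \<and> glue_map p1 p2 x = v \<and> glue_map p1 p2 y = w"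
      by (intro exI[of _ "Inr a"] exI[of _ "Inr b"]) (simp add: union_E_def)
  qed
qed

lemma glue_V_iff:
  "v \<in> glue_V V1 V2 p1 p2 \<longleftrightarrow> (\<exists>a\<in>V1. v = Inl a) \<or> (\<exists>b\<in>V2. v = glue_map p1 p2 (Inr b))"
  unfolding glue_V_def by (auto intro: image_eqI[of _ _ "Inl _"])

lemma finite_nbrs: "simple_graph V E \<Longrightarrow> finite (nbrs V E i)"
  unfolding simple_graph_def nbrs_def by auto

lemma degree_pos: "simple_graph V E \<Longrightarrow> i \<in> V \<Longrightarrow> degree V E i > 0"
  unfolding degree_def by (fastforce simp: card_gt_0_iff finite_nbrs nbrs_def simple_graph_def)

lemma nl_eigen_nbrs_sum_eq_0:
  assumes "simple_graph V E" "nl_eigen V E lam f" "p \<in> V" "f p = 0"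
  shows "(\<Sum>j\<in>nbrs V E p. f j) = 0"
proof -
  have "(1 / real (degree V E p)) * (\<Sum>j\<in>nbrs V E p. f j) = 0"
    using assms(2-4) unfolding nl_eigen_def by auto
  then show ?thesis
    using degree_pos[OF assms(1,3)] by simp
qed

context
  fixes V1 :: "'a set" and E1 :: "'a \<Rightarrow> 'a \<Rightarrow> bool"
    and V2 :: "'b set" and E2 :: "'b \<Rightarrow> 'b \<Rightarrow> bool"
    and p1 :: 'a and p2 :: 'b
  assumes G1: "simple_graph V1 E1" and G2: "simple_graph V2 E2"
begin

lemma nbrs_glue_Inl:
  "a \<noteq> p1 \<Longrightarrow> nbrs (glue_V V1 V2 p1 p2) (glue_E E1 E2 p1 p2) (Inl a) = Inl ` nbrs V1 E1 a"
  using G1 unfolding nbrs_def glue_E_iff glue_V_iff simple_graph_def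
  by (auto simp: glue_map_Inr split: if_splits)

lemma nbrs_glue_Inr:
  "b \<noteq> p2 \<Longrightarrow> nbrs (glue_V V1 V2 p1 p2) (glue_E E1 E2 p1 p2) (Inr b)
     = (\<lambda>b. glue_map p1 p2 (Inr b)) ` nbrs V2 E2 b"
  using G2 unfolding nbrs_def glue_E_iff glue_V_iff simple_graph_def
  by (auto simp: glue_map_Inr image_iff split: if_splits)

lemma nbrs_glue_junction:
  "nbrs (glue_V V1 V2 p1 p2) (glue_E E1 E2 p1 p2) (Inl p1)
     = Inl ` nbrs V1 E1 p1 \<union> (\<lambda>b. glue_map p1 p2 (Inr b)) ` nbrs V2 E2 p2"
  using G1 G2 unfolding nbrs_def glue_E_iff glue_V_iff simple_graph_def
  by (auto simp: glue_map_Inr image_iff split: if_splits)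

lemma nbrs_glue_junction_disjoint:
  "Inl ` nbrs V1 E1 p1 \<inter> (\<lambda>b. glue_map p1 p2 (Inr b)) ` nbrs V2 E2 p2 = {}"
  using G2 by (auto simp: nbrs_def glue_map_Inr simple_graph_def split: if_splits)

lemma glue_nbrs_average_Inl:
  assumes "a \<noteq> p1"
  shows "(1 / real (degree (glue_V V1 V2 p1 p2) (glue_E E1 E2 p1 p2) (Inl a)))
           * (\<Sum>j\<in>nbrs (glue_V V1 V2 p1 p2) (glue_E E1 E2 p1 p2) (Inl a). case_sum g h j)
         = (1 / real (degree V1 E1 a)) * (\<Sum>j\<in>nbrs V1 E1 a. g j)"
  by (simp add: degree_def nbrs_glue_Inl[OF assms] card_image sum.reindex)

lemma glue_nbrs_average_Inr:
  assumes "b \<noteq> p2" "g p1 = h p2"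
  shows "(1 / real (degree (glue_V V1 V2 p1 p2) (glue_E E1 E2 p1 p2) (Inr b)))
           * (\<Sum>j\<in>nbrs (glue_V V1 V2 p1 p2) (glue_E E1 E2 p1 p2) (Inr b). case_sum g h j)
         = (1 / real (degree V2 E2 b)) * (\<Sum>j\<in>nbrs V2 E2 b. h j)"
proof -
  have "case_sum g h (glue_map p1 p2 (Inr c)) = h c" for c
    using assms(2) by (simp add: glue_map_Inr)
  then show ?thesis
    by (simp add: degree_def nbrs_glue_Inr[OF assms(1)] card_image[OF inj_on_glue_map_Inr]
        sum.reindex[OF inj_on_glue_map_Inr])
qed

lemma glue_nbrs_sum_junction:
  assumes "g p1 = h p2"
  shows "(\<Sum>j\<in>nbrs (glue_V V1 V2 p1 p2) (glue_E E1 E2 p1 p2) (Inl p1). case_sum g h j)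
         = (\<Sum>j\<in>nbrs V1 E1 p1. g j) + (\<Sum>j\<in>nbrs V2 E2 p2. h j)"
proof -
  have "case_sum g h (glue_map p1 p2 (Inr c)) = h c" for c
    using assms by (simp add: glue_map_Inr)
  then show ?thesis
    unfolding nbrs_glue_junction
    by (simp add: sum.union_disjoint finite_nbrs[OF G1] finite_nbrs[OF G2]
        nbrs_glue_junction_disjoint sum.reindex sum.reindex[OF inj_on_glue_map_Inr])
qed

lemma nl_eigen_glue:
  assumes eigen1: "nl_eigen V1 E1 lam f1" and eigen2: "nl_eigen V2 E2 lam f2"
    and "p1 \<in> V1" "p2 \<in> V2" and zero1: "f1 p1 = 0" and zero2: "f2 p2 = 0"
  shows "nl_eigen (glue_V V1 V2 p1 p2) (glue_E E1 E2 p1 p2) lam (case_sum f1 f2)"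
  unfolding nl_eigen_def
proof
  obtain a where "a \<in> V1" "f1 a \<noteq> 0"
    using eigen1 unfolding nl_eigen_def by blast
  then show "\<exists>v\<in>glue_V V1 V2 p1 p2. case_sum f1 f2 v \<noteq> 0"
    by (intro bexI[of _ "Inl a"]) (auto simp: glue_V_iff)
next
  show "\<forall>v\<in>glue_V V1 V2 p1 p2.
          1 / real (degree (glue_V V1 V2 p1 p2) (glue_E E1 E2 p1 p2) v)
          * (\<Sum>j\<in>nbrs (glue_V V1 V2 p1 p2) (glue_E E1 E2 p1 p2) v. case_sum f1 f2 j)
          = (1 - lam) * case_sum f1 f2 v"
  proof
    fix v assume "v \<in> glue_V V1 V2 p1 p2"
    then consider (left) a where "a \<in> V1" "a \<noteq> p1" "v = Inl a" | (junction) "v = Inl p1"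
      | (right) b where "b \<in> V2" "b \<noteq> p2" "v = Inr b"
      unfolding glue_V_iff by (auto simp: glue_map_Inr split: if_splits)
    then show "1 / real (degree (glue_V V1 V2 p1 p2) (glue_E E1 E2 p1 p2) v)
          * (\<Sum>j\<in>nbrs (glue_V V1 V2 p1 p2) (glue_E E1 E2 p1 p2) v. case_sum f1 f2 j)
          = (1 - lam) * case_sum f1 f2 v"
    proof cases
      case left
      then show ?thesis
        using glue_nbrs_average_Inl[OF \<open>a \<noteq> p1\<close>, of f1 f2] eigen1
        by (simp add: nl_eigen_def)
    next
      case junction
      have "(\<Sum>j\<in>nbrs V1 E1 p1. f1 j) = 0" "(\<Sum>j\<in>nbrs V2 E2 p2. f2 j) = 0"
        using nl_eigen_nbrs_sum_eq_0[OF G1 eigen1 \<open>p1 \<in> V1\<close> zero1]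
          nl_eigen_nbrs_sum_eq_0[OF G2 eigen2 \<open>p2 \<in> V2\<close> zero2] .
      then show ?thesis
        using junction zero1 zero2 by (simp add: glue_nbrs_sum_junction)
    next
      case right
      then show ?thesis
        using glue_nbrs_average_Inr[OF \<open>b \<noteq> p2\<close>, of f1 f2] eigen2 zero1 zero2
        by (simp add: nl_eigen_def)
    qed
  qed
qed

end

theorem theorem6:
  fixes V1 :: "'a set" and E1 :: "'a \<Rightarrow> 'a \<Rightarrow> bool"
    and V2 :: "'b set" and E2 :: "'b \<Rightarrow> 'b \<Rightarrow> bool"
    and lam :: real and f1 :: "'a \<Rightarrow> real" and f2 :: "'b \<Rightarrow> real"
    and p1 :: 'a and p2 :: 'b
  assumes "connected_graph V1 E1" and "connected_graph V2 E2"
    and "nl_eigen V1 E1 lam f1" and "nl_eigen V2 E2 lam f2"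
    and "p1 \<in> V1" and "p2 \<in> V2"
    and "f1 p1 = 0" and "f2 p2 = 0"
  shows "\<exists>u. nl_eigen (glue_V V1 V2 p1 p2) (glue_E E1 E2 p1 p2) lam u
           \<and> (\<forall>x\<in>V1. u (glue_map p1 p2 (Inl x)) = f1 x)
           \<and> (\<forall>y\<in>V2. u (glue_map p1 p2 (Inr y)) = f2 y)"
proof (intro exI conjI ballI)
  have "simple_graph V1 E1" "simple_graph V2 E2"
    using assms(1,2) unfolding connected_graph_def by auto
  from nl_eigen_glue[OF this assms(3-8)]
  show "nl_eigen (glue_V V1 V2 p1 p2) (glue_E E1 E2 p1 p2) lam (case_sum f1 f2)" .
  show "case_sum f1 f2 (glue_map p1 p2 (Inl x)) = f1 x" for x
    by simp
  show "case_sum f1 f2 (glue_map p1 p2 (Inr y)) = f2 y" for y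
    using assms(7,8) by (simp add: glue_map_Inr)
qed

end
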